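(* Let $G=(V,E)$ be an $n$-vertex graph, $q>0$ an integer, and $0<\alpha<1$. Let $V_\alpha=\{v\in V: r(v)\ge\alpha\}$. Then $|V_\alpha|\le c_q/\alpha$, where $c_q=\sum_{i=0}^{q}q^i$.
   Context: $q$-random BFS ($q$-RBFS) from a vertex $v$ in the random neighbor model (where a random neighbor query for $u$ returns a uniformly random neighbor of $u$): initialize a queue $Q=(v)$, level $\ell[v]=0$ (all others $\infty$), and $H=(\{v\},\emptyset)$ rooted at $v$; while $Q$ is nonempty, pop $u$ and make $q$ independent random neighbor queries for $u$ obtaining $s_{u,1},\dots,s_{u,q}$; for each $i$ add $s_{u,i}$ and the edge $\{u,s_{u,i}\}$ to $H$, and if $\ell[u]<q-1$ and $\ell[s_{u,i}]=\infty$, set $\ell[s_{u,i}]=\ell[u]+1$ and enqueue $s_{u,i}$; return $H$ (undirected, simple). The reach probability $r(v)=r_q(v)$ of a vertex $v$ is the probability that a $q$-RBFS started at a uniformly random vertex of $V$ reaches (i.e., includes in its returned graph) $v$. *)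

theory Defs
  imports "HOL-Probability.Probability"
begin

definition simple_graph :: "'a set \<Rightarrow> ('a \<Rightarrow> 'a \<Rightarrow> bool) \<Rightarrow> bool" where
  "simple_graph V E \<longleftrightarrow> finite V \<and> (\<forall>u w. E u w \<longrightarrow> u \<in> V \<and> w \<in> V)
     \<and> (\<forall>u w. E u w \<longrightarrow> E w u) \<and> (\<forall>u. \<not> E u u)"

definition nbrs :: "('a \<Rightarrow> 'a \<Rightarrow> bool) \<Rightarrow> 'a \<Rightarrow> 'a set" where
  "nbrs E u = {w. E u w}"

fun rn_queries :: "('a \<Rightarrow> 'a \<Rightarrow> bool) \<Rightarrow> nat \<Rightarrow> 'a \<Rightarrow> 'a list pmf" where
  "rn_queries E 0 u = return_pmf []"
| "rn_queries E (Suc k) u =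
     (if nbrs E u = {} then return_pmf [] else
      do { s \<leftarrow> pmf_of_set (nbrs E u); ss \<leftarrow> rn_queries E k u; return_pmf (s # ss) })"

text \<open>State of the q-RBFS: queue, level map (None = infinity), vertices and edges of H.\<close>
type_synonym 'a rbfs_state = "'a list \<times> ('a \<Rightarrow> nat option) \<times> 'a set \<times> 'a set set"

fun rbfs_process :: "nat \<Rightarrow> 'a \<Rightarrow> nat \<Rightarrow> 'a list \<Rightarrow> 'a rbfs_state \<Rightarrow> 'a rbfs_state" where
  "rbfs_process q u lu [] st = st"
| "rbfs_process q u lu (s # ss) (Q, lev, Hv, He) =
     rbfs_process q u lu ss
       (if lu < q - 1 \<and> lev s = None
        then (Q @ [s], lev(s := Some (lu + 1)), insert s Hv, insert {u, s} He)
        else (Q, lev, insert s Hv, insert {u, s} He))"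

text \<open>One iteration of the while loop (only applied to a non-empty queue).\<close>
fun rbfs_step :: "('a \<Rightarrow> 'a \<Rightarrow> bool) \<Rightarrow> nat \<Rightarrow> 'a rbfs_state \<Rightarrow> 'a rbfs_state pmf" where
  "rbfs_step E q ([], lev, Hv, He) = return_pmf ([], lev, Hv, He)"
| "rbfs_step E q (u # Q, lev, Hv, He) =
     map_pmf (\<lambda>ss. rbfs_process q u (the (lev u)) ss (Q, lev, Hv, He)) (rn_queries E q u)"

text \<open>The while loop, run with fuel; each vertex is enqueued at most once, so fuel
  card V (the number of vertices) suffices for the queue to become empty.\<close>
fun rbfs_loop :: "('a \<Rightarrow> 'a \<Rightarrow> bool) \<Rightarrow> nat \<Rightarrow> nat \<Rightarrow> 'a rbfs_state \<Rightarrow> 'a rbfs_state pmf" where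
  "rbfs_loop E q 0 st = return_pmf st"
| "rbfs_loop E q (Suc k) st =
     (if fst st = [] then return_pmf st else rbfs_step E q st \<bind> rbfs_loop E q k)"

definition qRBFS :: "'a set \<Rightarrow> ('a \<Rightarrow> 'a \<Rightarrow> bool) \<Rightarrow> nat \<Rightarrow> 'a \<Rightarrow> ('a set \<times> 'a set set) pmf" where
  "qRBFS V E q v =
     map_pmf (\<lambda>(Q, lev, Hv, He). (Hv, He))
       (rbfs_loop E q (card V) ([v], (\<lambda>_. None)(v := Some 0), {v}, {}))"

definition reach_prob :: "'a set \<Rightarrow> ('a \<Rightarrow> 'a \<Rightarrow> bool) \<Rightarrow> nat \<Rightarrow> 'a \<Rightarrow> real" where
  "reach_prob V E q v =
     measure_pmf.prob (pmf_of_set V \<bind> qRBFS V E q) {H. v \<in> fst H}"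

end

theory Submission
  imports Defs
begin

text \<open>Every returned graph \<open>H\<close> has at most \<open>c\<^sub>q = \<Sum>i=0..q. q\<^sup>i\<close> vertices: a vertex
  enqueued at level \<open>l\<close> triggers \<open>q\<close> queries, each adding at most one vertex which is
  itself enqueued at level \<open>l + 1\<close> only if \<open>l + 1 < q\<close>; so it can be charged with the
  potential \<open>\<Sum>i=1..q-l. q\<^sup>i\<close>, and \<open>|H| + \<Sum> potentials of queued vertices \<le> c\<^sub>q\<close> is an
  invariant of the search.
  Hence \<open>\<Sum>\<^sub>v r(v) = E|V \<inter> H| \<le> c\<^sub>q\<close>, and counting the vertices with \<open>r(v) \<ge> \<alpha>\<close>
  (Markov's inequality for the counting measure) gives the bound.\<close>

lemma sum_prob_mem_le:
  fixes M :: "'b pmf" and S :: "'b \<Rightarrow> 'a set"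
  assumes "finite V" and "\<And>x. x \<in> set_pmf M \<Longrightarrow> finite (S x) \<and> card (S x) \<le> c"
  shows "(\<Sum>v\<in>V. measure_pmf.prob M {x. v \<in> S x}) \<le> real c"
proof -
  have integrable: "integrable (measure_pmf M) (indicator {x. v \<in> S x} :: 'b \<Rightarrow> real)" for v
    by (rule measure_pmf.integrable_const_bound[where B = 1]) auto
  have "(\<Sum>v\<in>V. measure_pmf.prob M {x. v \<in> S x})
      = (\<integral>x. (\<Sum>v\<in>V. indicator {x. v \<in> S x} x) \<partial>measure_pmf M)"
    using integrable by simp
  also have "\<dots> \<le> real c"
  proof (rule measure_pmf.integral_le_const)
    show "integrable (measure_pmf M) (\<lambda>x. \<Sum>v\<in>V. indicator {x. v \<in> S x} x :: real)"
      using integrable by simp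
    show "AE x in measure_pmf M. (\<Sum>v\<in>V. indicator {x. v \<in> S x} x :: real) \<le> real c"
    proof (rule AE_pmfI)
      fix x assume x: "x \<in> set_pmf M"
      have "(\<Sum>v\<in>V. indicator {x. v \<in> S x} x :: real) = real (card (V \<inter> S x))"
        using assms(1) by (simp add: indicator_def sum.If_cases Int_def)
      also have "card (V \<inter> S x) \<le> card (S x)"
        using assms(2)[OF x] by (intro card_mono) auto
      finally show "(\<Sum>v\<in>V. indicator {x. v \<in> S x} x :: real) \<le> real c"
        using assms(2)[OF x] by linarith
    qed
  qed
  finally show ?thesis .
qed

lemma card_superlevel_le:
  fixes f :: "'a \<Rightarrow> real"
  assumes "finite V" and "\<And>v. v \<in> V \<Longrightarrow> 0 \<le> f v" and "0 < \<alpha>"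
  shows "real (card {v \<in> V. \<alpha> \<le> f v}) \<le> (\<Sum>v\<in>V. f v) / \<alpha>"
proof -
  have "\<alpha> * real (card {v \<in> V. \<alpha> \<le> f v}) = (\<Sum>v\<in>{v \<in> V. \<alpha> \<le> f v}. \<alpha>)"
    by simp
  also have "\<dots> \<le> (\<Sum>v\<in>{v \<in> V. \<alpha> \<le> f v}. f v)"
    by (rule sum_mono) simp
  also have "\<dots> \<le> (\<Sum>v\<in>V. f v)"
    using assms(1,2) by (intro sum_mono2) auto
  finally show ?thesis
    using assms(3) by (simp add: field_simps mult.commute)
qed

definition rbfs_bound :: "nat \<Rightarrow> nat" where
  "rbfs_bound q = (\<Sum>i=0..q. q ^ i)"

definition rbfs_potential :: "nat \<Rightarrow> nat \<Rightarrow> nat" where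
  "rbfs_potential q l = (\<Sum>i=1..q - l. q ^ i)"

lemma sum_powers_Suc: "(\<Sum>i=1..Suc m. q ^ i) = q * (1 + (\<Sum>i=1..m. (q::nat) ^ i))"
proof -
  have "(\<Sum>i=1..Suc m. q ^ i) = q + (\<Sum>i=Suc 1..Suc m. q ^ i)"
    by (simp add: sum.atLeast_Suc_atMost)
  also have "(\<Sum>i=Suc 1..Suc m. q ^ i) = (\<Sum>i=1..m. q ^ Suc i)"
    by (subst sum.shift_bounds_cl_Suc_ivl[symmetric]) simp
  finally show ?thesis
    by (simp add: sum_distrib_left algebra_simps)
qed

text \<open>At the last level \<open>l = q - 1\<close> the potential of \<open>Suc l\<close> is an empty sum (truncated
  subtraction), matching the fact that samples of such vertices are never enqueued.\<close>

lemma rbfs_potential_Suc: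
  assumes "l < q"
  shows "rbfs_potential q l = q * (1 + rbfs_potential q (Suc l))"
proof -
  have "q - l = Suc (q - Suc l)"
    using assms by simp
  then show ?thesis
    by (simp only: rbfs_potential_def sum_powers_Suc)
qed

lemma rbfs_bound_eq: "rbfs_bound q = 1 + rbfs_potential q 0"
  unfolding rbfs_bound_def rbfs_potential_def by (simp add: sum.atLeast_Suc_atMost)

definition rbfs_inv :: "nat \<Rightarrow> 'a rbfs_state \<Rightarrow> bool" where
  "rbfs_inv q st \<longleftrightarrow> (case st of (Q, lev, Hv, _) \<Rightarrow>
     finite Hv \<and> (\<forall>u\<in>set Q. \<exists>l. lev u = Some l \<and> l < q) \<and>
     card Hv + (\<Sum>u\<leftarrow>Q. rbfs_potential q (the (lev u))) \<le> rbfs_bound q)"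

lemma length_rn_queries_le: "ss \<in> set_pmf (rn_queries E k u) \<Longrightarrow> length ss \<le> k"
  by (induction k arbitrary: ss) (auto split: if_splits)

text \<open>Each sample costs at most one new vertex plus, if it is enqueued, its potential.\<close>

lemma rbfs_process_inv:
  assumes "finite Hv" and "\<forall>u\<in>set Q. \<exists>l. lev u = Some l \<and> l < q"
    and "card Hv + (\<Sum>u\<leftarrow>Q. rbfs_potential q (the (lev u)))
           + length ss * (1 + rbfs_potential q (Suc lu)) \<le> rbfs_bound q"
  shows "rbfs_inv q (rbfs_process q u lu ss (Q, lev, Hv, He))"
  using assms
proof (induction ss arbitrary: Q lev Hv He)
  case Nil
  then show ?case by (simp add: rbfs_inv_def)
next
  case (Cons s ss)
  have card_insert: "card (insert s Hv) \<le> Suc (card Hv)"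
    using Cons.prems(1) by (simp add: card_insert_if)
  show ?case
  proof (cases "lu < q - 1 \<and> lev s = None")
    case True
    have "s \<notin> set Q"
      using Cons.prems(2) True by force
    then have unchanged: "map (\<lambda>u. rbfs_potential q (the ((lev(s := Some (Suc lu))) u))) Q
        = map (\<lambda>u. rbfs_potential q (the (lev u))) Q"
      by (intro map_cong) auto
    have load: "(\<Sum>u\<leftarrow>Q @ [s]. rbfs_potential q (the ((lev(s := Some (Suc lu))) u)))
        = (\<Sum>u\<leftarrow>Q. rbfs_potential q (the (lev u))) + rbfs_potential q (Suc lu)"
      by (simp only: map_append sum_list_append unchanged) simp
    have "rbfs_inv q (rbfs_process q u lu ss
        (Q @ [s], lev(s := Some (Suc lu)), insert s Hv, insert {u, s} He))"
    proof (rule Cons.IH)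
      show "card (insert s Hv) + (\<Sum>u\<leftarrow>Q @ [s]. rbfs_potential q (the ((lev(s := Some (Suc lu))) u)))
          + length ss * (1 + rbfs_potential q (Suc lu)) \<le> rbfs_bound q"
        unfolding load using Cons.prems(3) card_insert by simp
    qed (use Cons.prems True in auto)
    then show ?thesis
      using True by simp
  next
    case False
    have "rbfs_inv q (rbfs_process q u lu ss (Q, lev, insert s Hv, insert {u, s} He))"
      using Cons.prems card_insert by (intro Cons.IH) auto
    then show ?thesis
      using False by auto
  qed
qed

lemma rbfs_step_inv:
  assumes "rbfs_inv q st" and "fst st \<noteq> []" and "st' \<in> set_pmf (rbfs_step E q st)"
  shows "rbfs_inv q st'"
proof -
  obtain u Q lev Hv He where st: "st = (u # Q, lev, Hv, He)"
    using assms(2) by (metis prod.collapse list.exhaust fst_conv)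
  obtain ss where ss: "ss \<in> set_pmf (rn_queries E q u)"
    and st': "st' = rbfs_process q u (the (lev u)) ss (Q, lev, Hv, He)"
    using assms(3) st by auto
  obtain lu where lu: "lev u = Some lu" "lu < q"
    using assms(1) st by (auto simp: rbfs_inv_def)
  have "length ss * (1 + rbfs_potential q (Suc lu)) \<le> q * (1 + rbfs_potential q (Suc lu))"
    using length_rn_queries_le[OF ss] by (intro mult_right_mono) auto
  also have "\<dots> = rbfs_potential q lu"
    using rbfs_potential_Suc[OF lu(2)] by simp
  finally show ?thesis
    unfolding st' using assms(1) st lu
    by (intro rbfs_process_inv) (auto simp: rbfs_inv_def)
qed

lemma rbfs_loop_inv:
  "rbfs_inv q st \<Longrightarrow> st' \<in> set_pmf (rbfs_loop E q k st) \<Longrightarrow> rbfs_inv q st'"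
proof (induction k arbitrary: st)
  case 0
  then show ?case by simp
next
  case (Suc k)
  show ?case
  proof (cases "fst st = []")
    case True
    then show ?thesis using Suc.prems by simp
  next
    case False
    then obtain st1 where "st1 \<in> set_pmf (rbfs_step E q st)" "st' \<in> set_pmf (rbfs_loop E q k st1)"
      using Suc.prems(2) by auto
    then show ?thesis
      using Suc.IH rbfs_step_inv[OF Suc.prems(1) False] by blast
  qed
qed

lemma card_vertices_qRBFS_le:
  assumes "q > 0" and "H \<in> set_pmf (qRBFS V E q v)"
  shows "finite (fst H) \<and> card (fst H) \<le> rbfs_bound q"
proof -
  have init: "rbfs_inv q ([v], (\<lambda>_. None)(v := Some 0), {v}, {})"
    using assms(1) by (simp add: rbfs_inv_def rbfs_bound_eq)
  obtain Q lev Hv He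
    where "(Q, lev, Hv, He) \<in> set_pmf (rbfs_loop E q (card V) ([v], (\<lambda>_. None)(v := Some 0), {v}, {}))"
      and "H = (Hv, He)"
    using assms(2) unfolding qRBFS_def by auto
  then show ?thesis
    using rbfs_loop_inv[OF init] by (fastforce simp: rbfs_inv_def)
qed

theorem lemma3p7:
  fixes V :: "'a set" and E :: "'a \<Rightarrow> 'a \<Rightarrow> bool" and q :: nat and \<alpha> :: real
  assumes "simple_graph V E" and "V \<noteq> {}"
    and "q > 0" and "0 < \<alpha>" and "\<alpha> < 1"
  shows "real (card {v \<in> V. reach_prob V E q v \<ge> \<alpha>}) \<le> (\<Sum>i=0..q. real q ^ i) / \<alpha>"
proof -
  have "finite V"
    using assms(1) by (simp add: simple_graph_def)
  have "real (card {v \<in> V. reach_prob V E q v \<ge> \<alpha>}) \<le> (\<Sum>v\<in>V. reach_prob V E q v) / \<alpha>"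
    using \<open>finite V\<close> assms(4) by (intro card_superlevel_le) (simp_all add: reach_prob_def)
  also have "(\<Sum>v\<in>V. reach_prob V E q v) \<le> real (rbfs_bound q)"
    unfolding reach_prob_def
    using \<open>finite V\<close> by (intro sum_prob_mem_le) (auto dest!: card_vertices_qRBFS_le[OF assms(3)])
  finally show ?thesis
    using assms(4) by (simp add: divide_right_mono rbfs_bound_def)
qed

end
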